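(* $(\mathbb{S},\sigma)$ is the final $F$-coalgebra in $\mathbf{Met_3}^{C}$.
   Context: A tripointed metric space is a set with three distinct points $T,L,R$ and a metric bounded by $1$ in which $T,L,R$ have pairwise distance $1$. $\mathbf{Met_3}^{C}$: tripointed metric spaces with continuous maps preserving $T,L,R$. Let $M=\{a,b,c\}$. For a tripointed metric space $X$, $M\times X$ has metric $d((m,x),(n,y))=\tfrac12d(x,y)$ if $m=n$ and $1$ otherwise; $M\otimes X$ is the quotient metric space by the equivalence relation generated by $(b,T)\sim(a,L)$, $(a,R)\sim(c,T)$, $(c,L)\sim(b,R)$, with elements $m\otimes x$ and distinguished points $a\otimes T,b\otimes L,c\otimes R$; $F=M\otimes-$ with $(M\otimes f)(m\otimes x)=m\otimes f(x)$. A coalgebra is $(X,e\colon X\to FX)$; it is final if every coalgebra has a unique coalgebra morphism $h$ into it ($\beta\circ h=Fh\circ\alpha$). The Sierpinski gasket $\mathbb{S}\subset\mathbb{R}^2$ is the unique nonempty compact set with $\mathbb{S}=\sigma_a(\mathbb{S})\cup\sigma_b(\mathbb{S})\cup\sigma_c(\mathbb{S})$, where $\sigma_a(x,y)=(x/2,y/2)+(1/4,\sqrt3/4)$, $\sigma_b(x,y)=(x/2,y/2)$, $\sigma_c(x,y)=(x/2,y/2)+(1/2,0)$; it carries the Euclidean metric and distinguished points $T=(1/2,\sqrt3/2)$, $L=(0,0)$, $R=(1,0)$. The map $\tau\colon M\otimes\mathbb{S}\to\mathbb{S}$, $\tau(m\otimes x)=\sigma_m(x)$, is a bijection preserving distinguished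 points, and $\sigma=\tau^{-1}\colon\mathbb{S}\to M\otimes\mathbb{S}$. *)

theory Defs
  imports "HOL-Analysis.Analysis"
begin

definition tripointed :: "'a set \<Rightarrow> ('a \<Rightarrow> 'a \<Rightarrow> real) \<Rightarrow> 'a \<Rightarrow> 'a \<Rightarrow> 'a \<Rightarrow> bool" where
  "tripointed X d T L R \<longleftrightarrow>
     Metric_space X d \<and> (\<forall>x\<in>X. \<forall>y\<in>X. d x y \<le> 1) \<and>
     T \<in> X \<and> L \<in> X \<and> R \<in> X \<and> d T L = 1 \<and> d T R = 1 \<and> d L R = 1"

definition metric_cont :: "'a set \<Rightarrow> ('a \<Rightarrow> 'a \<Rightarrow> real) \<Rightarrow> 'b set \<Rightarrow> ('b \<Rightarrow> 'b \<Rightarrow> real) \<Rightarrow> ('a \<Rightarrow> 'b) \<Rightarrow> bool" where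
  "metric_cont X dX Y dY f \<longleftrightarrow> f ` X \<subseteq> Y \<and>
     (\<forall>x\<in>X. \<forall>e>0. \<exists>\<delta>>0. \<forall>y\<in>X. dX x y < \<delta> \<longrightarrow> dY (f x) (f y) < e)"

definition met3_mor ::
  "'a set \<Rightarrow> ('a \<Rightarrow> 'a \<Rightarrow> real) \<Rightarrow> 'a \<Rightarrow> 'a \<Rightarrow> 'a \<Rightarrow>
   'b set \<Rightarrow> ('b \<Rightarrow> 'b \<Rightarrow> real) \<Rightarrow> 'b \<Rightarrow> 'b \<Rightarrow> 'b \<Rightarrow> ('a \<Rightarrow> 'b) \<Rightarrow> bool" where
  "met3_mor X dX TX LX RX Y dY TY LY RY f \<longleftrightarrow>
     metric_cont X dX Y dY f \<and> f TX = TY \<and> f LX = LY \<and> f RX = RY"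

datatype mlab = Ma | Mb | Mc

definition prod_dist :: "('a \<Rightarrow> 'a \<Rightarrow> real) \<Rightarrow> mlab \<times> 'a \<Rightarrow> mlab \<times> 'a \<Rightarrow> real" where
  "prod_dist d p q = (if fst p = fst q then d (snd p) (snd q) / 2 else 1)"

definition glue_gen :: "'a \<Rightarrow> 'a \<Rightarrow> 'a \<Rightarrow> ((mlab \<times> 'a) \<times> (mlab \<times> 'a)) set" where
  "glue_gen T L R = {((Mb,T),(Ma,L)), ((Ma,R),(Mc,T)), ((Mc,L),(Mb,R))}"

definition glue_rel :: "'a set \<Rightarrow> 'a \<Rightarrow> 'a \<Rightarrow> 'a \<Rightarrow> ((mlab \<times> 'a) \<times> (mlab \<times> 'a)) set" where
  "glue_rel X T L R = Id_on (UNIV \<times> X) \<union> (glue_gen T L R \<union> (glue_gen T L R)\<inverse>)\<^sup>+"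

definition quot_dist :: "'a set \<Rightarrow> ('a \<Rightarrow> 'a \<Rightarrow> real) \<Rightarrow> ('a \<times> 'a) set \<Rightarrow> 'a set \<Rightarrow> 'a set \<Rightarrow> real" where
  "quot_dist S d E P Q = Inf {(\<Sum>i\<le>n. d (p i) (q i)) | p q n.
       (\<forall>i\<le>n. p i \<in> S \<and> q i \<in> S) \<and> p 0 \<in> P \<and> q n \<in> Q \<and>
       (\<forall>i<n. (q i, p (Suc i)) \<in> E)}"

definition tens_carrier :: "'a set \<Rightarrow> 'a \<Rightarrow> 'a \<Rightarrow> 'a \<Rightarrow> (mlab \<times> 'a) set set" where
  "tens_carrier X T L R = (UNIV \<times> X) // glue_rel X T L R"

definition tens_dist :: "'a set \<Rightarrow> ('a \<Rightarrow> 'a \<Rightarrow> real) \<Rightarrow> 'a \<Rightarrow> 'a \<Rightarrow> 'a \<Rightarrow>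
    (mlab \<times> 'a) set \<Rightarrow> (mlab \<times> 'a) set \<Rightarrow> real" where
  "tens_dist X d T L R = quot_dist (UNIV \<times> X) (prod_dist d) (glue_rel X T L R)"

definition tens_el :: "'a set \<Rightarrow> 'a \<Rightarrow> 'a \<Rightarrow> 'a \<Rightarrow> mlab \<Rightarrow> 'a \<Rightarrow> (mlab \<times> 'a) set" where
  "tens_el X T L R m x = glue_rel X T L R `` {(m, x)}"

text \<open>F on morphisms: (M \<otimes> f)(m \<otimes> x) = m \<otimes> f x (target space Y with points TY LY RY).\<close>
definition tens_map :: "'b set \<Rightarrow> 'b \<Rightarrow> 'b \<Rightarrow> 'b \<Rightarrow> ('a \<Rightarrow> 'b) \<Rightarrow>
    (mlab \<times> 'a) set \<Rightarrow> (mlab \<times> 'b) set" where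
  "tens_map Y TY LY RY f P = glue_rel Y TY LY RY `` ((\<lambda>(m, x). (m, f x)) ` P)"

definition coalg :: "'a set \<Rightarrow> ('a \<Rightarrow> 'a \<Rightarrow> real) \<Rightarrow> 'a \<Rightarrow> 'a \<Rightarrow> 'a \<Rightarrow> ('a \<Rightarrow> (mlab \<times> 'a) set) \<Rightarrow> bool" where
  "coalg X d T L R e \<longleftrightarrow> tripointed X d T L R \<and>
     met3_mor X d T L R (tens_carrier X T L R) (tens_dist X d T L R)
       (tens_el X T L R Ma T) (tens_el X T L R Mb L) (tens_el X T L R Mc R) e"

definition coalg_mor ::
  "'a set \<Rightarrow> ('a \<Rightarrow> 'a \<Rightarrow> real) \<Rightarrow> 'a \<Rightarrow> 'a \<Rightarrow> 'a \<Rightarrow> ('a \<Rightarrow> (mlab \<times> 'a) set) \<Rightarrow>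
   'b set \<Rightarrow> ('b \<Rightarrow> 'b \<Rightarrow> real) \<Rightarrow> 'b \<Rightarrow> 'b \<Rightarrow> 'b \<Rightarrow> ('b \<Rightarrow> (mlab \<times> 'b) set) \<Rightarrow>
   ('a \<Rightarrow> 'b) \<Rightarrow> bool" where
  "coalg_mor X dX TX LX RX e Y dY TY LY RY f h \<longleftrightarrow>
     met3_mor X dX TX LX RX Y dY TY LY RY h \<and>
     (\<forall>x\<in>X. f (h x) = tens_map Y TY LY RY h (e x))"

definition sig :: "mlab \<Rightarrow> real \<times> real \<Rightarrow> real \<times> real" where
  "sig m p = (case m of
      Ma \<Rightarrow> (fst p / 2 + 1/4, snd p / 2 + sqrt 3 / 4)
    | Mb \<Rightarrow> (fst p / 2, snd p / 2)
    | Mc \<Rightarrow> (fst p / 2 + 1/2, snd p / 2))"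

definition gasket :: "(real \<times> real) set" where
  "gasket = (THE S. S \<noteq> {} \<and> compact S \<and> S = sig Ma ` S \<union> sig Mb ` S \<union> sig Mc ` S)"

definition gT :: "real \<times> real" where "gT = (1/2, sqrt 3 / 2)"
definition gL :: "real \<times> real" where "gL = (0, 0)"
definition gR :: "real \<times> real" where "gR = (1, 0)"

text \<open>tau (m \<otimes> x) = sig m x, and sigma = tau inverse.\<close>
definition gtau :: "(mlab \<times> (real \<times> real)) set \<Rightarrow> real \<times> real" where
  "gtau P = (THE y. \<exists>(m, x)\<in>P. y = sig m x)"

definition gsigma :: "real \<times> real \<Rightarrow> (mlab \<times> (real \<times> real)) set" where
  "gsigma = the_inv_into (tens_carrier gasket gT gL gR) gtau"

end

theory Submission
  imports Defs
begin

text \<open>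
  The gasket is the attractor of the three similitudes sig m; it is the intersection of the
  iterated images of the solid triangle, and two different pieces sig m ` gasket meet only in a
  shared corner, which is exactly the gluing of M \<otimes> gasket. Hence gtau is a bijection and
  gsigma is continuous, since near a point p only the pieces containing p are met.

  For a coalgebra (X, e), the coalgebra morphisms into the gasket are the fixed points of
  step g = gtau \<circ> (M \<otimes> g) \<circ> e on maps preserving T, L, R. Because each sig m halves
  distances, step is a 1/2-contraction for the uniform distance, so its iterates from any such
  map into the triangle converge uniformly to its unique fixed point. Continuity survives each
  step: a chain of length < 1/2 in M \<times> X can cross at most one gluing, because the glued
  points T, L, R are at mutual distance 1.
\<close>

section \<open>The similitudes and the solid triangle\<close>

definition corner :: "mlab \<Rightarrow> real \<times> real" where
  "corner m = (case m of Ma \<Rightarrow> gT | Mb \<Rightarrow> gL | Mc \<Rightarrow> gR)"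

lemma sig_eq_midpoint: "sig m p = midpoint p (corner m)"
  by (cases m; cases p) (auto simp: sig_def corner_def gT_def gL_def gR_def midpoint_def)

lemma dist_sig_sig: "dist (sig m p) (sig m q) = dist p q / 2"
proof -
  have "sig m p - sig m q = (1/2) *\<^sub>R (p - q)"
    by (simp add: sig_eq_midpoint midpoint_def algebra_simps)
  then show ?thesis by (simp add: dist_norm)
qed

lemma sig_corner: "sig m (corner m) = corner m"
  by (simp add: sig_eq_midpoint)

lemma sig_fixes_corners: "sig Ma gT = gT" "sig Mb gL = gL" "sig Mc gR = gR"
  using sig_corner[of Ma] sig_corner[of Mb] sig_corner[of Mc] by (simp_all add: corner_def)

lemma sig_glue: "sig Mb gT = sig Ma gL" "sig Ma gR = sig Mc gT" "sig Mc gL = sig Mb gR"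
  by (simp_all add: sig_def gT_def gL_def gR_def)

lemma continuous_on_sig: "continuous_on A (sig m)"
  unfolding sig_eq_midpoint midpoint_def by (intro continuous_intros)

lemma dist_gasket_corners: "dist gT gL = 1" "dist gT gR = 1" "dist gL gR = 1"
  by (simp_all add: gT_def gL_def gR_def dist_Pair_Pair power_divide dist_real_def)

definition gasket_hull :: "(real \<times> real) set" where
  "gasket_hull = convex hull {gT, gL, gR}"

lemma convex_gasket_hull: "convex gasket_hull"
  by (simp add: gasket_hull_def)

lemma compact_gasket_hull: "compact gasket_hull"
  by (simp add: gasket_hull_def finite_imp_compact_convex_hull)

lemma corners_in_gasket_hull: "gT \<in> gasket_hull" "gL \<in> gasket_hull" "gR \<in> gasket_hull" "corner m \<in> gasket_hull"
  by (auto simp: gasket_hull_def hull_inc corner_def split: mlab.split)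

lemma sig_in_gasket_hull: "p \<in> gasket_hull \<Longrightarrow> sig m p \<in> gasket_hull"
  using convexD[OF convex_gasket_hull _ corners_in_gasket_hull(4), of p "1/2" "1/2" m]
  by (simp add: sig_eq_midpoint midpoint_def scaleR_add_right)

lemma gasket_hull_diameter:
  assumes "p \<in> gasket_hull" "q \<in> gasket_hull" shows "dist p q \<le> 1"
proof -
  have hull_ball: "gasket_hull \<subseteq> cball v 1" if "v \<in> {gT, gL, gR}" for v
    unfolding gasket_hull_def using that dist_gasket_corners
    by (intro hull_minimal) (auto simp: dist_commute)
  then have "dist v q \<le> 1" if "v \<in> {gT, gL, gR}" for v
    using subsetD[OF hull_ball[OF that] assms(2)] by simp
  then have "{gT, gL, gR} \<subseteq> cball q 1"
    by (auto simp: dist_commute)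
  then have "gasket_hull \<subseteq> cball q 1"
    unfolding gasket_hull_def by (intro hull_minimal) auto
  then show ?thesis using assms(1) by (auto simp: dist_commute)
qed

lemma gasket_hull_coordinates:
  "gasket_hull = {(u/2 + w, u * sqrt 3 / 2) | u w. 0 \<le> u \<and> 0 \<le> w \<and> u + w \<le> 1}"
proof -
  have "u *\<^sub>R gT + v *\<^sub>R gL + w *\<^sub>R gR = (u/2 + w, u * sqrt 3 / 2)" for u v w
    by (simp add: gT_def gL_def gR_def)
  then have "gasket_hull = {(u/2 + w, u * sqrt 3 / 2) | u v w. 0 \<le> u \<and> 0 \<le> v \<and> 0 \<le> w \<and> u + v + w = 1}"
    unfolding gasket_hull_def convex_hull_3 by simp
  also have "\<dots> = {(u/2 + w, u * sqrt 3 / 2) | u w. 0 \<le> u \<and> 0 \<le> w \<and> u + w \<le> 1}"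
  proof (intro set_eqI iffI; clarsimp)
    fix u w :: real assume "0 \<le> u" "0 \<le> w" "u + w \<le> 1"
    then show "\<exists>v\<ge>0. u + v + w = 1" by (intro exI[of _ "1 - u - w"]) auto
  qed
  finally show ?thesis .
qed

lemma sig_eq_sig_in_gasket_hull:
  assumes "m \<noteq> n" "p \<in> gasket_hull" "q \<in> gasket_hull" "sig m p = sig n q"
  shows "p = corner n \<and> q = corner m"
proof -
  obtain u1 w1 u2 w2 where
    uw: "0 \<le> u1" "0 \<le> w1" "u1 + w1 \<le> 1" "p = (u1/2 + w1, u1 * sqrt 3 / 2)"
        "0 \<le> u2" "0 \<le> w2" "u2 + w2 \<le> 1" "q = (u2/2 + w2, u2 * sqrt 3 / 2)"
    using assms(2,3) unfolding gasket_hull_coordinates by blast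
  have sum: "p + corner m = q + corner n"
    using assms(4) by (simp add: sig_eq_midpoint midpoint_def)
  \<comment> \<open>in the affine coordinates (u, w) of the triangle the equation becomes linear\<close>
  define h :: "mlab \<Rightarrow> real" where "h k = (if k = Ma then 1 else 0)" for k
  define w :: "mlab \<Rightarrow> real" where "w k = (if k = Mc then 1 else 0)" for k
  have corner_hw: "corner k = (h k / 2 + w k, h k * sqrt 3 / 2)" for k
    by (cases k) (simp_all add: h_def w_def corner_def gT_def gL_def gR_def)
  have "(u1 + h m - u2 - h n) * sqrt 3 = 0"
    using arg_cong[OF sum, of snd] uw(4,8) unfolding corner_hw by (simp add: field_simps)
  then have hs: "u1 + h m = u2 + h n"
    by simp
  have "u1/2 + w1 + (h m / 2 + w m) = u2/2 + w2 + (h n / 2 + w n)"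
    using arg_cong[OF sum, of fst] uw(4,8) unfolding corner_hw by simp
  with hs have ws: "w1 + w m = w2 + w n"
    by linarith
  have "u1 = h n \<and> w1 = w n \<and> u2 = h m \<and> w2 = w m"
    using hs ws uw(1-3,5-7) assms(1)
    by (cases m; cases n; simp add: h_def w_def; linarith)
  then show ?thesis
    by (simp add: uw(4,8) corner_hw)
qed

section \<open>The gasket as the intersection of stages\<close>

lemma UNIV_mlab: "(UNIV :: mlab set) = {Ma, Mb, Mc}"
  using mlab.exhaust by auto

instance mlab :: finite
  by standard (simp add: UNIV_mlab)

text \<open>The point of A farthest from B is an image f i a, and infdist (f i a) B \<le> c * infdist a B.\<close>
lemma invariant_compact_subset:
  fixes f :: "'i \<Rightarrow> 'a::heine_borel \<Rightarrow> 'a"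
  assumes contr: "\<And>i x y. dist (f i x) (f i y) \<le> c * dist x y" and "0 \<le> c" "c < 1"
    and A: "compact A" "A \<noteq> {}" "A = (\<Union>i. f i ` A)"
    and B: "compact B" "B \<noteq> {}" "B = (\<Union>i. f i ` B)"
  shows "A \<subseteq> B"
proof -
  have "continuous_on A (\<lambda>a. infdist a B)"
    by (intro continuous_intros)
  then obtain a0 where a0: "a0 \<in> A" "\<And>a. a \<in> A \<Longrightarrow> infdist a B \<le> infdist a0 B"
    using continuous_attains_sup[OF A(1,2)] by blast
  obtain i a where a: "a \<in> A" "a0 = f i a"
    using a0(1) A(3) by blast
  obtain b where b: "b \<in> B" "infdist a B = dist a b"
    using infdist_attains_inf[OF compact_imp_closed[OF B(1)] B(2)] by blast
  have "f i b \<in> B"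
    using b(1) B(3) by blast
  then have "infdist a0 B \<le> dist (f i a) (f i b)"
    unfolding a(2) by (rule infdist_le)
  also have "\<dots> \<le> c * infdist a B"
    using contr b(2) by simp
  also have "\<dots> \<le> c * infdist a0 B"
    using a0(2)[OF a(1)] \<open>0 \<le> c\<close> by (rule mult_left_mono)
  finally have "infdist a0 B \<le> 0"
    using \<open>c < 1\<close> infdist_nonneg[of a0 B] by (simp add: mult_le_cancel_right1)
  then have "infdist a B = 0" if "a \<in> A" for a
    using a0(2)[OF that] infdist_nonneg[of a B] by linarith
  then show ?thesis
    using in_closed_iff_infdist_zero[OF compact_imp_closed[OF B(1)] B(2)] by blast
qed

fun stage :: "nat \<Rightarrow> (real \<times> real) set" where
  "stage 0 = gasket_hull"
| "stage (Suc n) = (\<Union>m. sig m ` stage n)"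

lemma stage_subset_hull: "stage n \<subseteq> gasket_hull"
  by (induction n) (auto simp: sig_in_gasket_hull)

lemma stage_Suc_subset: "stage (Suc n) \<subseteq> stage n"
proof (induction n)
  case 0
  then show ?case by (auto simp: sig_in_gasket_hull)
next
  case (Suc n)
  then show ?case by (simp only: stage.simps(2)) blast
qed

lemma stage_antimono: "n \<le> k \<Longrightarrow> stage k \<subseteq> stage n"
  by (rule lift_Suc_antimono_le[of stage, OF stage_Suc_subset])

lemma compact_stage: "compact (stage n)"
proof (induction n)
  case 0
  then show ?case by (simp add: compact_gasket_hull)
next
  case (Suc n)
  then have "compact (sig m ` stage n)" for m
    by (rule compact_continuous_image[OF continuous_on_sig])
  then show ?case
    by (auto simp: UNIV_mlab)
qed

lemma corners_in_stage: "gT \<in> stage n \<and> gL \<in> stage n \<and> gR \<in> stage n"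
proof (induction n)
  case 0
  then show ?case by (simp add: corners_in_gasket_hull)
next
  case (Suc n)
  then have "sig Ma gT \<in> stage (Suc n)" "sig Mb gL \<in> stage (Suc n)" "sig Mc gR \<in> stage (Suc n)"
    by auto
  then show ?case
    by (simp add: sig_fixes_corners)
qed

lemma Inter_stages_invariant: "(\<Inter>n. stage n) = (\<Union>m. sig m ` (\<Inter>n. stage n))"
proof
  show "(\<Union>m. sig m ` (\<Inter>n. stage n)) \<subseteq> (\<Inter>n. stage n)"
    using stage_Suc_subset by fastforce
next
  show "(\<Inter>n. stage n) \<subseteq> (\<Union>m. sig m ` (\<Inter>n. stage n))"
  proof
    fix y assume y: "y \<in> (\<Inter>n. stage n)"
    define u where "u m = 2 *\<^sub>R y - corner m" for m
    have sig_iff: "sig m z = y \<longleftrightarrow> z = u m" for m z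
      by (auto simp: u_def sig_eq_midpoint midpoint_eq_iff scaleR_2 algebra_simps)
    have "\<exists>m\<in>UNIV. u m \<in> stage n" for n
    proof -
      have "y \<in> stage (Suc n)"
        using y by blast
      then obtain m z where "z \<in> stage n" "sig m z = y"
        by auto
      then have "u m \<in> stage n"
        using sig_iff by metis
      then show ?thesis
        by blast
    qed
    \<comment> \<open>pigeonhole: one of the three preimages lies in infinitely many, hence in all, stages\<close>
    then have "\<exists>\<^sub>F n in sequentially. \<exists>m\<in>UNIV. u m \<in> stage n"
      by (intro eventually_frequently always_eventually) auto
    then have "\<exists>m\<in>UNIV. \<exists>\<^sub>F n in sequentially. u m \<in> stage n"
      by (intro frequently_bex_finite) auto
    then obtain m where frequent: "\<exists>\<^sub>F n in sequentially. u m \<in> stage n"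
      by blast
    have "u m \<in> stage n" for n
    proof -
      obtain k where "n \<le> k" "u m \<in> stage k"
        using frequent unfolding frequently_sequentially by blast
      then show ?thesis
        using stage_antimono by blast
    qed
    then have "u m \<in> (\<Inter>n. stage n)"
      by blast
    moreover have "y = sig m (u m)"
      using sig_iff by metis
    ultimately show "y \<in> (\<Union>m. sig m ` (\<Inter>n. stage n))"
      by blast
  qed
qed

lemma compact_Inter_stages: "compact (\<Inter>n. stage n)"
proof -
  have "(\<Inter>n. stage n) \<subseteq> stage 0"
    by blast
  then have "bounded (\<Inter>n. stage n)"
    using bounded_subset[OF compact_imp_bounded[OF compact_stage]] by blast
  then show ?thesis
    using compact_imp_closed[OF compact_stage] by (auto simp: compact_eq_bounded_closed intro: closed_INT)
qed

lemma gasket_eq_Inter_stages: "gasket = (\<Inter>n. stage n)"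
proof -
  have invariant_iff: "S = sig Ma ` S \<union> sig Mb ` S \<union> sig Mc ` S \<longleftrightarrow> S = (\<Union>m. sig m ` S)" for S
    by (simp add: UNIV_mlab Un_assoc)
  note compact = compact_Inter_stages
  have nonempty: "(\<Inter>n. stage n) \<noteq> {}"
    using corners_in_stage by blast
  have attractor_unique: "S \<subseteq> S'"
    if "compact S" "S \<noteq> {}" "S = (\<Union>m. sig m ` S)" "compact S'" "S' \<noteq> {}" "S' = (\<Union>m. sig m ` S')"
    for S S'
    by (rule invariant_compact_subset[of sig "1/2"]) (use that dist_sig_sig in auto)
  show ?thesis
    unfolding gasket_def
  proof (rule the_equality)
    show "(\<Inter>n. stage n) \<noteq> {} \<and> compact (\<Inter>n. stage n) \<and>
      (\<Inter>n. stage n) = sig Ma ` (\<Inter>n. stage n) \<union> sig Mb ` (\<Inter>n. stage n) \<union> sig Mc ` (\<Inter>n. stage n)"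
      unfolding invariant_iff by (intro conjI compact nonempty Inter_stages_invariant)
  next
    fix S assume "S \<noteq> {} \<and> compact S \<and> S = sig Ma ` S \<union> sig Mb ` S \<union> sig Mc ` S"
    then have S: "compact S" "S \<noteq> {}" "S = (\<Union>m. sig m ` S)"
      using invariant_iff by auto
    show "S = (\<Inter>n. stage n)"
      using attractor_unique[OF S compact nonempty Inter_stages_invariant]
        attractor_unique[OF compact nonempty Inter_stages_invariant S]
      by (rule antisym)
  qed
qed

section \<open>The gluing relation and the space M \<otimes> X\<close>

lemma trancl_least: "r \<subseteq> s \<Longrightarrow> trans s \<Longrightarrow> r\<^sup>+ \<subseteq> s"
  using trancl_mono_subset[of r s] by simp

abbreviation glue_step :: "'a \<Rightarrow> 'a \<Rightarrow> 'a \<Rightarrow> ((mlab \<times> 'a) \<times> (mlab \<times> 'a)) set" where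
  "glue_step T L R \<equiv> glue_gen T L R \<union> (glue_gen T L R)\<inverse>"

lemma glue_step_subset_glue_rel: "glue_step T L R \<subseteq> glue_rel X T L R"
  by (auto simp: glue_rel_def)

lemma glue_step_corners: "(p, q) \<in> glue_step T L R \<Longrightarrow> snd p \<in> {T, L, R} \<and> snd q \<in> {T, L, R}"
  by (auto simp: glue_gen_def)

lemma glue_step_unique:
  assumes "T \<noteq> L" "T \<noteq> R" "L \<noteq> R" "(p, q) \<in> glue_step T L R" "(p, q') \<in> glue_step T L R"
  shows "q = q'"
  using assms unfolding glue_gen_def by auto

lemma respects_glue_rel_iff:
  "F respects glue_rel X T L R \<longleftrightarrow> F (Mb, T) = F (Ma, L) \<and> F (Ma, R) = F (Mc, T) \<and> F (Mc, L) = F (Mb, R)"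
proof
  assume "F respects glue_rel X T L R"
  then show "F (Mb, T) = F (Ma, L) \<and> F (Ma, R) = F (Mc, T) \<and> F (Mc, L) = F (Mb, R)"
    using glue_step_subset_glue_rel[of T L R X] by (auto simp: congruent_def glue_gen_def)
next
  assume "F (Mb, T) = F (Ma, L) \<and> F (Ma, R) = F (Mc, T) \<and> F (Mc, L) = F (Mb, R)"
  then have "glue_step T L R \<subseteq> {(p, q). F p = F q}"
    by (auto simp: glue_gen_def)
  then have "(glue_step T L R)\<^sup>+ \<subseteq> {(p, q). F p = F q}"
    by (rule trancl_least) (auto simp: trans_def)
  then show "F respects glue_rel X T L R"
    by (auto simp: congruent_def glue_rel_def)
qed

lemma glue_rel_map:
  assumes "(p, q) \<in> glue_rel X T L R" "f ` X \<subseteq> Y" "f T = T'" "f L = L'" "f R = R'"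
  shows "(apsnd f p, apsnd f q) \<in> glue_rel Y T' L' R'"
proof -
  let ?K = "{(p, q). (apsnd f p, apsnd f q) \<in> (glue_step T' L' R')\<^sup>+}"
  have "glue_step T L R \<subseteq> ?K"
    using assms(3-5) by (auto simp: glue_gen_def)
  then have "(glue_step T L R)\<^sup>+ \<subseteq> ?K"
    by (rule trancl_least) (auto simp: trans_def)
  then show ?thesis
    using assms(1,2) by (auto simp: glue_rel_def)
qed

lemma equiv_glue_rel:
  assumes "T \<in> X" "L \<in> X" "R \<in> X"
  shows "equiv (UNIV \<times> X) (glue_rel X T L R)"
proof (rule equivI)
  have "glue_step T L R \<subseteq> (UNIV \<times> X) \<times> (UNIV \<times> X)"
    using assms by (auto simp: glue_gen_def)
  then show "glue_rel X T L R \<subseteq> (UNIV \<times> X) \<times> (UNIV \<times> X)"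
    unfolding glue_rel_def using trancl_subset_Sigma by blast
  show "refl_on (UNIV \<times> X) (glue_rel X T L R)"
    by (auto simp: refl_on_def glue_rel_def)
  have "sym ((glue_step T L R)\<^sup>+)"
    by (intro sym_trancl sym_Un_converse)
  then show "sym (glue_rel X T L R)"
    by (auto simp: glue_rel_def sym_def)
  show "trans (glue_rel X T L R)"
    by (auto simp: trans_def glue_rel_def intro: trancl_trans)
qed

lemma glue_rel_distinct_cases:
  assumes "T \<noteq> L" "T \<noteq> R" "L \<noteq> R" "(p, q) \<in> glue_rel X T L R"
  shows "p = q \<or> (p, q) \<in> glue_step T L R"
proof -
  have "trans (Id \<union> glue_step T L R)"
    using assms(1-3) unfolding trans_def by (auto simp: glue_gen_def)
  then have "(glue_step T L R)\<^sup>+ \<subseteq> Id \<union> glue_step T L R"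
    by (rule trancl_least[rotated]) blast
  then show ?thesis
    using assms(4) by (auto simp: glue_rel_def)
qed

lemma tens_el_in_carrier: "x \<in> X \<Longrightarrow> tens_el X T L R m x \<in> tens_carrier X T L R"
  unfolding tens_el_def tens_carrier_def by (rule quotientI) simp

lemma tens_carrierE:
  assumes "P \<in> tens_carrier X T L R"
  obtains m x where "x \<in> X" "P = tens_el X T L R m x"
  using assms unfolding tens_carrier_def tens_el_def by (auto elim!: quotientE)

lemma mem_tens_el_iff: "p \<in> tens_el X T L R m x \<longleftrightarrow> ((m, x), p) \<in> glue_rel X T L R"
  by (simp add: tens_el_def)

lemma tens_el_self: "x \<in> X \<Longrightarrow> (m, x) \<in> tens_el X T L R m x"
  by (simp add: mem_tens_el_iff glue_rel_def Id_on_iff)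

lemma tens_el_eq_iff:
  assumes "T \<in> X" "L \<in> X" "R \<in> X" "x \<in> X" "y \<in> X"
  shows "tens_el X T L R m x = tens_el X T L R n y \<longleftrightarrow> ((m, x), (n, y)) \<in> glue_rel X T L R"
  unfolding tens_el_def using eq_equiv_class_iff[OF equiv_glue_rel[OF assms(1-3)]] assms(4,5) by simp

lemma tens_carrier_member:
  assumes "T \<in> X" "L \<in> X" "R \<in> X" "P \<in> tens_carrier X T L R" "(m, x) \<in> P"
  shows "x \<in> X" "P = tens_el X T L R m x"
proof -
  obtain n y where "y \<in> X" "P = tens_el X T L R n y"
    using assms(4) by (rule tens_carrierE)
  moreover have "glue_rel X T L R \<subseteq> (UNIV \<times> X) \<times> (UNIV \<times> X)"
    using equiv_glue_rel[OF assms(1-3)] by (simp add: equiv_def refl_on_def)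
  ultimately show "x \<in> X" "P = tens_el X T L R m x"
    using assms(5) equiv_class_eq[OF equiv_glue_rel[OF assms(1-3)]] by (auto simp: tens_el_def)
qed

lemma univ_tens_el:
  assumes "T \<in> X" "L \<in> X" "R \<in> X" "F respects glue_rel X T L R" "x \<in> X"
  shows "univ F (tens_el X T L R m x) = F (m, x)"
  using univ_commute[OF equiv_glue_rel[OF assms(1-3)] assms(4)] assms(5) by (simp add: tens_el_def proj_def)

lemma tens_map_tens_el:
  assumes "T \<in> X" "L \<in> X" "R \<in> X" "T' \<in> Y" "L' \<in> Y" "R' \<in> Y"
    and f: "f ` X \<subseteq> Y" "f T = T'" "f L = L'" "f R = R'" and "x \<in> X"
  shows "tens_map Y T' L' R' f (tens_el X T L R m x) = tens_el Y T' L' R' m (f x)"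
proof -
  have class_eq: "glue_rel Y T' L' R' `` {apsnd f p} = tens_el Y T' L' R' m (f x)"
    if "p \<in> tens_el X T L R m x" for p
  proof -
    have "((m, x), p) \<in> glue_rel X T L R"
      using that by (simp add: mem_tens_el_iff)
    from glue_rel_map[OF this f] show ?thesis
      using equiv_class_eq[OF equiv_glue_rel[OF assms(4-6)]] by (simp add: tens_el_def)
  qed
  have "(\<lambda>(m, x). (m, f x)) = apsnd f"
    by auto
  then have "tens_map Y T' L' R' f (tens_el X T L R m x)
      = (\<Union>p \<in> tens_el X T L R m x. glue_rel Y T' L' R' `` {apsnd f p})"
    by (auto simp: tens_map_def)
  also have "\<dots> = tens_el Y T' L' R' m (f x)"
    using class_eq tens_el_self[OF \<open>x \<in> X\<close>] by blast
  finally show ?thesis .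
qed

lemma quot_dist_le_chain:
  assumes "\<And>a b. 0 \<le> d a b" "\<forall>i\<le>n. p i \<in> S \<and> q i \<in> S" "p 0 \<in> P" "q n \<in> Q"
    "\<forall>i<n. (q i, p (Suc i)) \<in> E"
  shows "quot_dist S d E P Q \<le> (\<Sum>i\<le>n. d (p i) (q i))"
  unfolding quot_dist_def
  by (rule cInf_lower) (use assms in \<open>auto intro!: bdd_belowI[of _ 0] sum_nonneg\<close>)

lemma quot_dist_less_chain:
  assumes "quot_dist S d E P Q < r" "a \<in> P \<inter> S" "b \<in> Q \<inter> S"
  obtains p q n where "\<forall>i\<le>n. p i \<in> S \<and> q i \<in> S" "p 0 \<in> P" "q n \<in> Q"
    "\<forall>i<n. (q i, p (Suc i)) \<in> E" "(\<Sum>i\<le>n. d (p i) (q i)) < r"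
proof -
  let ?C = "{(\<Sum>i\<le>n. d (p i) (q i)) | p q n. (\<forall>i\<le>n. p i \<in> S \<and> q i \<in> S) \<and>
      p 0 \<in> P \<and> q n \<in> Q \<and> (\<forall>i<n. (q i, p (Suc i)) \<in> E)}"
  have "d a b \<in> ?C"
    using assms(2,3) by (intro CollectI exI[of _ "\<lambda>_. a"] exI[of _ "\<lambda>_. b"] exI[of _ 0]) auto
  then obtain s where "s \<in> ?C" "s < r"
    using cInf_lessD[of ?C r] assms(1) unfolding quot_dist_def by blast
  then show thesis
    using that by blast
qed

lemma tens_dist_tens_el_le:
  assumes "\<And>a b. 0 \<le> d a b" "x \<in> X" "y \<in> X"
  shows "tens_dist X d T L R (tens_el X T L R m x) (tens_el X T L R m y) \<le> d x y / 2"
  using quot_dist_le_chain[of "prod_dist d" 0 "\<lambda>_. (m, x)" "UNIV \<times> X" "\<lambda>_. (m, y)"] assms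
  by (simp add: tens_dist_def prod_dist_def tens_el_self)

lemma finite_uniform_pos:
  assumes "finite A" "\<And>a. a \<in> A \<Longrightarrow> \<exists>\<delta>>0. P a \<delta>"
    and mono: "\<And>a \<delta> \<delta>'. a \<in> A \<Longrightarrow> P a \<delta> \<Longrightarrow> 0 < \<delta>' \<Longrightarrow> \<delta>' \<le> \<delta> \<Longrightarrow> P a \<delta>'"
  shows "\<exists>\<delta>>0. \<forall>a\<in>A. P a (\<delta>::real)"
proof -
  obtain f where f: "\<And>a. a \<in> A \<Longrightarrow> f a > 0 \<and> P a (f a)"
    using assms(2) by metis
  define \<delta> where "\<delta> = Min (insert 1 (f ` A))"
  have "\<delta> > 0"
    using assms(1) f by (auto simp: \<delta>_def)
  moreover have "P a \<delta>" if "a \<in> A" for a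
    using mono[OF that _ \<open>\<delta> > 0\<close>] f[OF that] assms(1) that by (auto simp: \<delta>_def)
  ultimately show ?thesis
    by blast
qed

lemma nonpos_if_le_half_pow: "(\<And>n. (a::real) \<le> (1/2) ^ n) \<Longrightarrow> a \<le> 0"
  using LIMSEQ_le_const[OF LIMSEQ_power_zero[of "1/2::real"]] by simp

lemma half_pow_Cauchy_lim:
  fixes f :: "nat \<Rightarrow> 'a::complete_space"
  assumes step: "\<And>n k. dist (f (n + k)) (f n) \<le> (1/2) ^ n"
  shows "f \<longlonglongrightarrow> lim f" and "dist (lim f) (f n) \<le> (1/2) ^ n"
proof -
  have close: "dist (f k) (f n) \<le> (1/2) ^ n" if "n \<le> k" for n k
    using step[of n "k - n"] that by simp
  have "Cauchy f"
  proof (rule metric_CauchyI)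
    fix \<epsilon> :: real assume "\<epsilon> > 0"
    then obtain N where N: "(1/2::real) ^ N < \<epsilon> / 2"
      using real_arch_pow_inv[of "\<epsilon> / 2" "1/2"] by auto
    have "dist (f m) (f n) < \<epsilon>" if "N \<le> m" "N \<le> n" for m n
      using dist_triangle[of "f m" "f n" "f N"] close[OF that(1)] close[OF that(2)] N
      by (simp add: dist_commute)
    then show "\<exists>M. \<forall>m\<ge>M. \<forall>n\<ge>M. dist (f m) (f n) < \<epsilon>"
      by blast
  qed
  then show lim: "f \<longlonglongrightarrow> lim f"
    by (simp add: Cauchy_convergent_iff convergent_LIMSEQ_iff)
  show "dist (lim f) (f n) \<le> (1/2) ^ n"
    by (rule LIMSEQ_le_const2[OF tendsto_dist[OF lim tendsto_const]]) (use close in blast)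
qed

lemma metric_cont_uniform_limit:
  fixes g :: "'a \<Rightarrow> 'b::metric_space"
  assumes cont: "\<And>n. metric_cont X d UNIV dist (f n)"
    and unif: "\<And>n x. x \<in> X \<Longrightarrow> dist (g x) (f n x) \<le> (1/2) ^ n"
  shows "metric_cont X d UNIV dist g"
  unfolding metric_cont_def
proof (intro conjI ballI allI impI)
  fix x and \<epsilon> :: real assume "x \<in> X" "\<epsilon> > 0"
  then obtain n where n: "(1/2::real) ^ n < \<epsilon> / 3"
    using real_arch_pow_inv[of "\<epsilon> / 3" "1/2"] by auto
  have "\<epsilon> / 3 > 0"
    using \<open>\<epsilon> > 0\<close> by simp
  then obtain \<delta> where "\<delta> > 0" and \<delta>: "\<forall>y\<in>X. d x y < \<delta> \<longrightarrow> dist (f n x) (f n y) < \<epsilon> / 3"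
    using cont[of n] \<open>x \<in> X\<close> unfolding metric_cont_def by blast
  have "dist (g x) (g y) < \<epsilon>" if "y \<in> X" "d x y < \<delta>" for y
  proof -
    have "dist (g x) (g y) \<le> dist (g x) (f n x) + dist (f n x) (f n y) + dist (f n y) (g y)"
      using dist_triangle[of "g x" "g y" "f n x"] dist_triangle[of "f n x" "g y" "f n y"] by linarith
    moreover have "dist (f n x) (f n y) < \<epsilon> / 3"
      using \<delta> that by blast
    ultimately show ?thesis
      using unif[OF \<open>x \<in> X\<close>, of n] unif[OF \<open>y \<in> X\<close>, of n] n by (simp add: dist_commute)
  qed
  then show "\<exists>\<delta>>0. \<forall>y\<in>X. d x y < \<delta> \<longrightarrow> dist (g x) (g y) < \<epsilon>"
    using \<open>\<delta> > 0\<close> by blast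
qed simp

lemma metric_cont_sig_comp:
  assumes "metric_cont X d UNIV dist g"
  shows "metric_cont X d UNIV dist (\<lambda>x. sig m (g x))"
  unfolding metric_cont_def
proof (intro conjI ballI allI impI)
  fix x and \<epsilon> :: real assume "x \<in> X" "\<epsilon> > 0"
  then obtain \<delta> where "\<delta> > 0" and \<delta>: "\<forall>y\<in>X. d x y < \<delta> \<longrightarrow> dist (g x) (g y) < \<epsilon>"
    using assms unfolding metric_cont_def by blast
  moreover have "dist (g x) (g y) / 2 \<le> dist (g x) (g y)" for y
    by simp
  ultimately have "\<forall>y\<in>X. d x y < \<delta> \<longrightarrow> dist (sig m (g x)) (sig m (g y)) < \<epsilon>"
    unfolding dist_sig_sig by (meson le_less_trans)
  then show "\<exists>\<delta>>0. \<forall>y\<in>X. d x y < \<delta> \<longrightarrow> dist (sig m (g x)) (sig m (g y)) < \<epsilon>"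
    using \<open>\<delta> > 0\<close> by blast
qed simp

section \<open>The gasket as a coalgebra\<close>

abbreviation gasket_glue :: "((mlab \<times> (real \<times> real)) \<times> (mlab \<times> (real \<times> real))) set" where
  "gasket_glue \<equiv> glue_rel gasket gT gL gR"

abbreviation gasket_el :: "mlab \<Rightarrow> real \<times> real \<Rightarrow> (mlab \<times> (real \<times> real)) set" where
  "gasket_el \<equiv> tens_el gasket gT gL gR"

abbreviation gasket_carrier :: "(mlab \<times> (real \<times> real)) set set" where
  "gasket_carrier \<equiv> tens_carrier gasket gT gL gR"

abbreviation gasket_tens_dist :: "(mlab \<times> (real \<times> real)) set \<Rightarrow> (mlab \<times> (real \<times> real)) set \<Rightarrow> real" where
  "gasket_tens_dist \<equiv> tens_dist gasket dist gT gL gR"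

lemma gasket_invariant: "gasket = (\<Union>m. sig m ` gasket)"
  unfolding gasket_eq_Inter_stages by (rule Inter_stages_invariant)

lemma gasket_subset_hull: "gasket \<subseteq> gasket_hull"
proof -
  have "(\<Inter>n. stage n) \<subseteq> stage 0"
    by blast
  then show ?thesis
    by (simp add: gasket_eq_Inter_stages)
qed

lemma corners_in_gasket: "gT \<in> gasket" "gL \<in> gasket" "gR \<in> gasket"
  using corners_in_stage gasket_eq_Inter_stages by auto

lemma compact_gasket: "compact gasket"
  using compact_Inter_stages gasket_eq_Inter_stages by simp

lemma gasketE:
  assumes "p \<in> gasket"
  obtains m x where "x \<in> gasket" "p = sig m x"
proof -
  have "p \<in> (\<Union>m. sig m ` gasket)"
    using assms by (subst (asm) gasket_invariant)
  then show thesis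
    using that by blast
qed

lemma gasket_diameter: "x \<in> gasket \<Longrightarrow> y \<in> gasket \<Longrightarrow> dist x y \<le> 1"
  using gasket_subset_hull gasket_hull_diameter by blast

lemma tripointed_gasket: "tripointed gasket dist gT gL gR"
  unfolding tripointed_def
  using Met_TC.subspace[of gasket] gasket_diameter corners_in_gasket dist_gasket_corners by auto

lemma sig_respects_glue: "(\<lambda>(m, x). sig m x) respects glue_rel X gT gL gR"
  by (simp add: respects_glue_rel_iff sig_glue)

lemma gtau_gasket_el:
  assumes "x \<in> gasket"
  shows "gtau (gasket_el m x) = sig m x"
proof -
  have class_sig: "sig n y = sig m x" if "(n, y) \<in> gasket_el m x" for n y
    using sig_respects_glue[of gasket] that unfolding congruent_def mem_tens_el_iff by fastforce
  show ?thesis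
    unfolding gtau_def
  proof (rule the_equality)
    show "\<exists>(n, y)\<in>gasket_el m x. sig m x = sig n y"
      using tens_el_self[OF assms] by blast
  qed (use class_sig in auto)
qed

lemma glue_step_corner_swap: "m \<noteq> n \<Longrightarrow> ((m, corner n), (n, corner m)) \<in> glue_step gT gL gR"
  by (cases m; cases n) (simp_all add: glue_gen_def corner_def)

lemma sig_eq_sig_imp_glue:
  assumes "x \<in> gasket" "y \<in> gasket" "sig m x = sig n y"
  shows "((m, x), (n, y)) \<in> gasket_glue"
proof (cases "m = n")
  case True
  then have "x = y"
    using assms(3) dist_sig_sig[of m x y] by simp
  then show ?thesis
    using True assms(1) by (simp add: glue_rel_def Id_on_iff)
next
  case False
  then have "x = corner n" "y = corner m"
    using sig_eq_sig_in_gasket_hull assms gasket_subset_hull by blast+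
  then show ?thesis
    using subsetD[OF glue_step_subset_glue_rel glue_step_corner_swap[OF False]] by simp
qed

lemma inj_on_gtau: "inj_on gtau gasket_carrier"
proof (rule inj_onI)
  fix P Q assume "P \<in> gasket_carrier" "Q \<in> gasket_carrier" "gtau P = gtau Q"
  moreover obtain m x where "x \<in> gasket" "P = gasket_el m x"
    using \<open>P \<in> gasket_carrier\<close> by (rule tens_carrierE)
  moreover obtain n y where "y \<in> gasket" "Q = gasket_el n y"
    using \<open>Q \<in> gasket_carrier\<close> by (rule tens_carrierE)
  ultimately show "P = Q"
    using sig_eq_sig_imp_glue tens_el_eq_iff[OF corners_in_gasket] by (simp add: gtau_gasket_el)
qed

lemma gsigma_sig: "x \<in> gasket \<Longrightarrow> gsigma (sig m x) = gasket_el m x"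
  unfolding gsigma_def
  by (rule the_inv_into_f_eq[OF inj_on_gtau gtau_gasket_el tens_el_in_carrier])

lemma gsigma_in_carrier: "p \<in> gasket \<Longrightarrow> gsigma p \<in> gasket_carrier"
  by (erule gasketE) (simp add: gsigma_sig tens_el_in_carrier)

lemma gsigma_eq_gasket_el_iff:
  assumes "p \<in> gasket" "x \<in> gasket"
  shows "gsigma p = gasket_el m x \<longleftrightarrow> p = sig m x"
proof
  obtain n z where "z \<in> gasket" "p = sig n z"
    using assms(1) by (rule gasketE)
  then have "gtau (gsigma p) = p"
    by (simp add: gsigma_sig gtau_gasket_el)
  then show "gsigma p = gasket_el m x \<Longrightarrow> p = sig m x"
    using gtau_gasket_el[OF assms(2)] by simp
qed (simp add: gsigma_sig assms(2))

lemma gsigma_continuous: "metric_cont gasket dist gasket_carrier gasket_tens_dist gsigma"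
  unfolding metric_cont_def
proof (intro conjI ballI allI impI)
  show "gsigma ` gasket \<subseteq> gasket_carrier"
    using gsigma_in_carrier by blast
next
  fix p and e :: real assume p: "p \<in> gasket" and "e > 0"
  have "\<exists>\<delta>>0. \<forall>m\<in>UNIV. \<forall>q\<in>sig m ` gasket. dist p q < \<delta> \<longrightarrow> p \<in> sig m ` gasket"
  proof (rule finite_uniform_pos)
    show "\<exists>\<delta>>0. \<forall>q\<in>sig m ` gasket. dist p q < \<delta> \<longrightarrow> p \<in> sig m ` gasket" for m
    proof (cases "p \<in> sig m ` gasket")
      case True
      then show ?thesis
        by (intro exI[of _ 1]) simp
    next
      case False
      have "closed (sig m ` gasket)" "sig m ` gasket \<noteq> {}"
        using compact_continuous_image[OF continuous_on_sig compact_gasket] corners_in_gasket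
        by (auto intro: compact_imp_closed)
      then show ?thesis
        using False infdist_pos_not_in_closed infdist_le not_le by metis
    qed
  qed force+
  then obtain \<delta> where "\<delta> > 0" and \<delta>: "\<And>m q. q \<in> sig m ` gasket \<Longrightarrow> dist p q < \<delta> \<Longrightarrow> p \<in> sig m ` gasket"
    by blast
  have "gasket_tens_dist (gsigma p) (gsigma q) < e" if q: "q \<in> gasket" and close: "dist p q < min \<delta> e" for q
  proof -
    obtain m z where z: "z \<in> gasket" "q = sig m z"
      using q by (rule gasketE)
    then obtain w where w: "w \<in> gasket" "p = sig m w"
      using \<delta> close by fastforce
    have "gasket_tens_dist (gsigma p) (gsigma q) \<le> dist w z / 2"
      using w z tens_dist_tens_el_le[of dist w gasket z] by (simp add: gsigma_sig)
    also have "\<dots> = dist p q"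
      using w z by (simp add: dist_sig_sig)
    finally show ?thesis
      using close by simp
  qed
  then show "\<exists>\<delta>>0. \<forall>q\<in>gasket. dist p q < \<delta> \<longrightarrow> gasket_tens_dist (gsigma p) (gsigma q) < e"
    using \<open>\<delta> > 0\<close> \<open>e > 0\<close> by (intro exI[of _ "min \<delta> e"]) auto
qed

lemma coalg_gasket: "coalg gasket dist gT gL gR gsigma"
  using tripointed_gasket gsigma_continuous gsigma_sig[OF corners_in_gasket(1), of Ma]
    gsigma_sig[OF corners_in_gasket(2), of Mb] gsigma_sig[OF corners_in_gasket(3), of Mc]
  by (simp add: coalg_def met3_mor_def sig_fixes_corners)

section \<open>Maps out of M \<otimes> X\<close>

locale tripointed_space =
  fixes X :: "'a set" and d :: "'a \<Rightarrow> 'a \<Rightarrow> real" and T L R :: 'a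
  assumes tripointed: "tripointed X d T L R"
begin

sublocale Metric_space X d
  using tripointed by (simp add: tripointed_def)

lemma corners_in: "T \<in> X" "L \<in> X" "R \<in> X"
  and dist_corners: "d T L = 1" "d T R = 1" "d L R = 1"
  and dist_le_1: "x \<in> X \<Longrightarrow> y \<in> X \<Longrightarrow> d x y \<le> 1"
  using tripointed by (auto simp: tripointed_def)

lemma corners_distinct: "T \<noteq> L" "T \<noteq> R" "L \<noteq> R"
  using dist_corners corners_in by auto

lemma corner_eq_if_close: "a \<in> {T, L, R} \<Longrightarrow> b \<in> {T, L, R} \<Longrightarrow> d a b < 1 \<Longrightarrow> a = b"
  using dist_corners commute[of L T] commute[of R T] commute[of R L] by auto

lemma glue_step_in: "(p, q) \<in> glue_step T L R \<Longrightarrow> snd p \<in> X \<and> snd q \<in> X"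
  using glue_step_corners[of p q T L R] corners_in by auto

text \<open>near m x0 c r: the point r of M \<times> X is reached from (m, x0) by a chain of length at most c
  that crosses at most one gluing; the factor 2 undoes the halving of d in prod_dist.
  Chains shorter than 1/2 stay near, as the glued points T, L, R are at mutual distance 1.\<close>
definition near :: "mlab \<Rightarrow> 'a \<Rightarrow> real \<Rightarrow> mlab \<times> 'a \<Rightarrow> bool" where
  "near m x0 c r \<longleftrightarrow> snd r \<in> X \<and>
     (fst r = m \<and> d x0 (snd r) \<le> 2 * c \<or>
      (\<exists>v v'. ((m, v), (fst r, v')) \<in> glue_step T L R \<and> d x0 v + d v' (snd r) \<le> 2 * c))"

lemma near_glue:
  assumes "near m x0 c r" "c < 1/2" "(r, p) \<in> glue_rel X T L R"
  shows "near m x0 c p"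
proof -
  consider "r = p" | "(r, p) \<in> glue_step T L R"
    using glue_rel_distinct_cases[OF corners_distinct assms(3)] by blast
  then show ?thesis
  proof cases
    case 2
    then have pX: "snd p \<in> X" and r_corner: "snd r \<in> {T, L, R}"
      using glue_step_in[OF 2] glue_step_corners[OF 2] by auto
    from assms(1) consider "fst r = m" "d x0 (snd r) \<le> 2 * c"
      | v v' where "((m, v), (fst r, v')) \<in> glue_step T L R" "d x0 v + d v' (snd r) \<le> 2 * c"
      unfolding near_def by blast
    then show ?thesis
    proof cases
      case 1
      then have "((m, snd r), (fst p, snd p)) \<in> glue_step T L R"
        using 2 by (metis prod.collapse)
      moreover have "d x0 (snd r) + d (snd p) (snd p) \<le> 2 * c"
        using 1(2) pX by simp
      ultimately show ?thesis
        using pX unfolding near_def by blast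
    next
      case (2 v v')
      have "d v' (snd r) < 1"
        using 2(2) assms(2) nonneg[of x0 v] by linarith
      then have "v' = snd r"
        using corner_eq_if_close[of v' "snd r"] glue_step_corners[OF 2(1)] r_corner by simp
      then have "(r, (m, v)) \<in> glue_step T L R"
        using 2(1) by (cases r) auto
      then have "p = (m, v)"
        using glue_step_unique[OF corners_distinct] \<open>(r, p) \<in> glue_step T L R\<close> by blast
      moreover have "d x0 v \<le> 2 * c"
        using 2(2) nonneg[of v' "snd r"] by linarith
      ultimately show ?thesis
        using pX by (simp add: near_def)
    qed
  qed (use assms(1) in simp)
qed

lemma near_nonneg: "near m x0 c r \<Longrightarrow> 0 \<le> c"
  unfolding near_def using nonneg by (smt (verit))

lemma near_move:
  assumes "x0 \<in> X" "near m x0 c p" "snd q \<in> X" "fst q = fst p"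
  shows "near m x0 (c + d (snd p) (snd q) / 2) q"
proof -
  have pX: "snd p \<in> X"
    using assms(2) by (simp add: near_def)
  from assms(2) consider "fst p = m" "d x0 (snd p) \<le> 2 * c"
    | v v' where "((m, v), (fst p, v')) \<in> glue_step T L R" "d x0 v + d v' (snd p) \<le> 2 * c"
    unfolding near_def by blast
  then show ?thesis
  proof cases
    case 1
    then show ?thesis
      using triangle[OF assms(1) pX assms(3)] assms(3,4) by (simp add: near_def)
  next
    case (2 v v')
    then have "v' \<in> X"
      using glue_step_in by fastforce
    then have "d x0 v + d v' (snd q) \<le> 2 * (c + d (snd p) (snd q) / 2)"
      using 2(2) triangle[OF _ pX assms(3), of v'] by simp
    then show ?thesis
      using 2(1) assms(3,4) unfolding near_def by auto
  qed
qed

lemma near_link: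
  assumes "x0 \<in> X" "near m x0 c r" "(r, a) \<in> glue_rel X T L R" "b \<in> UNIV \<times> X"
    and small: "c + prod_dist d a b < 1/2"
  shows "near m x0 (c + prod_dist d a b) b"
proof -
  have "0 \<le> prod_dist d a b"
    by (simp add: prod_dist_def)
  then have near_a: "near m x0 c a"
    using near_glue[OF assms(2) _ assms(3)] small by simp
  have "prod_dist d a b < 1"
    using small near_nonneg[OF assms(2)] by linarith
  then have same_label: "fst b = fst a" and link: "prod_dist d a b = d (snd a) (snd b) / 2"
    by (auto simp: prod_dist_def split: if_splits)
  have "near m x0 (c + d (snd a) (snd b) / 2) b"
    by (rule near_move[OF assms(1) near_a]) (use assms(4) same_label in auto)
  then show ?thesis
    by (simp only: link)
qed

lemma near_chain:
  assumes "x0 \<in> X" "\<forall>i\<le>n. p i \<in> UNIV \<times> X \<and> q i \<in> UNIV \<times> X" "p 0 \<in> tens_el X T L R m x0"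
    "\<forall>i<n. (q i, p (Suc i)) \<in> glue_rel X T L R" "(\<Sum>i\<le>n. prod_dist d (p i) (q i)) < 1/2"
  shows "near m x0 (\<Sum>i\<le>n. prod_dist d (p i) (q i)) (q n)"
proof -
  define S where "S k = (\<Sum>i\<le>k. prod_dist d (p i) (q i))" for k
  have "S k \<le> S n" if "k \<le> n" for k
    unfolding S_def using that by (intro sum_mono2) (auto simp: prod_dist_def)
  then have small: "S k < 1/2" if "k \<le> n" for k
    using that assms(5) unfolding S_def by fastforce
  have "near m x0 (S k) (q k)" if "k \<le> n" for k
    using that
  proof (induction k)
    case 0
    have "near m x0 0 (m, x0)"
      using assms(1) by (simp add: near_def)
    moreover have "((m, x0), p 0) \<in> glue_rel X T L R"
      using assms(3) by (simp add: mem_tens_el_iff)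
    moreover have "q 0 \<in> UNIV \<times> X"
      using assms(2) by blast
    ultimately show ?case
      using near_link[OF assms(1), of m 0 "(m, x0)" "p 0" "q 0"] small[OF 0] by (simp add: S_def)
  next
    case (Suc k)
    moreover have "(q k, p (Suc k)) \<in> glue_rel X T L R" "q (Suc k) \<in> UNIV \<times> X"
      using assms(2,4) Suc.prems by auto
    ultimately show ?case
      using near_link[OF assms(1), of m "S k" "q k" "p (Suc k)" "q (Suc k)"] small[OF Suc.prems]
      by (simp add: S_def)
  qed
  then show ?thesis
    by (simp add: S_def)
qed

lemma near_imp_dist_less:
  fixes F :: "mlab \<times> 'a \<Rightarrow> 'b::metric_space"
  assumes F: "F respects glue_rel X T L R"
    and cont: "\<forall>a\<in>UNIV \<times> {x0, T, L, R}. \<forall>z\<in>X. d (snd a) z < \<delta> \<longrightarrow> dist (F a) (F (fst a, z)) < \<epsilon> / 2"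
    and "near m x0 c r" "2 * c < \<delta>"
  shows "dist (F (m, x0)) (F r) < \<epsilon>"
proof -
  have rX: "snd r \<in> X"
    using assms(3) by (simp add: near_def)
  from assms(3) consider "fst r = m" "d x0 (snd r) \<le> 2 * c"
    | v v' where "((m, v), (fst r, v')) \<in> glue_step T L R" "d x0 v + d v' (snd r) \<le> 2 * c"
    unfolding near_def by blast
  then show ?thesis
  proof cases
    case 1
    then have "d x0 (snd r) < \<delta>"
      using assms(4) by linarith
    then have "dist (F (m, x0)) (F (m, snd r)) < \<epsilon> / 2"
      using cont[rule_format, of "(m, x0)" "snd r"] rX by simp
    moreover have "F r = F (m, snd r)"
      using 1 by (cases r) simp
    ultimately have "dist (F (m, x0)) (F r) < \<epsilon> / 2"
      by simp
    then show ?thesis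
      using zero_le_dist[of "F (m, x0)" "F r"] by linarith
  next
    case (2 v v')
    have "v \<in> X" "v' \<in> {T, L, R}"
      using glue_step_in[OF 2(1)] glue_step_corners[OF 2(1)] by auto
    have "d x0 v < \<delta>" "d v' (snd r) < \<delta>"
      using 2(2) assms(4) nonneg[of x0 v] nonneg[of v' "snd r"] by linarith+
    then have "dist (F (m, x0)) (F (m, v)) < \<epsilon> / 2"
      and "dist (F (fst r, v')) (F (fst r, snd r)) < \<epsilon> / 2"
      using cont[rule_format, of "(m, x0)" v] cont[rule_format, of "(fst r, v')" "snd r"]
        \<open>v \<in> X\<close> \<open>v' \<in> {T, L, R}\<close> rX by auto
    moreover have "F (m, v) = F (fst r, v')"
      using F 2(1) glue_step_subset_glue_rel by (fastforce simp: congruent_def)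
    moreover have "dist (F (m, x0)) (F r) \<le> dist (F (m, x0)) (F (m, v)) + dist (F (m, v)) (F r)"
      by (rule dist_triangle)
    ultimately show ?thesis
      by (cases r) simp
  qed
qed

lemma univ_continuous_at_tens_el:
  fixes F :: "mlab \<times> 'a \<Rightarrow> 'b::metric_space"
  assumes F: "F respects glue_rel X T L R" and cont: "\<And>m. metric_cont X d UNIV dist (\<lambda>x. F (m, x))"
    and "x0 \<in> X" "\<epsilon> > 0"
  shows "\<exists>\<delta>>0. \<forall>Q\<in>tens_carrier X T L R.
    tens_dist X d T L R (tens_el X T L R m x0) Q < \<delta> \<longrightarrow> dist (F (m, x0)) (univ F Q) < \<epsilon>"
proof -
  let ?close = "\<lambda>a \<delta>. \<forall>z\<in>X. d (snd a) z < \<delta> \<longrightarrow> dist (F a) (F (fst a, z)) < \<epsilon> / 2"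
  have "\<exists>\<delta>>0. \<forall>a\<in>UNIV \<times> {x0, T, L, R}. ?close a \<delta>"
  proof (rule finite_uniform_pos)
    show "\<exists>\<delta>>0. ?close a \<delta>" if "a \<in> UNIV \<times> {x0, T, L, R}" for a
    proof -
      obtain k v where a: "a = (k, v)"
        by (cases a)
      have "v \<in> X" "\<epsilon> / 2 > 0"
        using that a corners_in assms(3,4) by auto
      then show ?thesis
        using cont[of k] unfolding a fst_conv snd_conv metric_cont_def by blast
    qed
  next
    show "?close a \<delta>'" if "?close a \<delta>" "\<delta>' \<le> \<delta>" for a \<delta> \<delta>'
      using that by fastforce
  qed simp
  then obtain \<delta> where "\<delta> > 0" and \<delta>: "\<forall>a\<in>UNIV \<times> {x0, T, L, R}. ?close a \<delta>"
    by blast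
  have "dist (F (m, x0)) (univ F Q) < \<epsilon>"
    if Q: "Q \<in> tens_carrier X T L R" and close: "tens_dist X d T L R (tens_el X T L R m x0) Q < min (\<delta> / 2) (1 / 2)"
    for Q
  proof -
    obtain n y where "y \<in> X" "Q = tens_el X T L R n y"
      using Q by (rule tens_carrierE)
    then have ends: "(m, x0) \<in> tens_el X T L R m x0 \<inter> (UNIV \<times> X)" "(n, y) \<in> Q \<inter> (UNIV \<times> X)"
      using tens_el_self \<open>x0 \<in> X\<close> by auto
    obtain p q k where chain: "\<forall>i\<le>k. p i \<in> UNIV \<times> X \<and> q i \<in> UNIV \<times> X" "p 0 \<in> tens_el X T L R m x0"
      "q k \<in> Q" "\<forall>i<k. (q i, p (Suc i)) \<in> glue_rel X T L R"
      and short: "(\<Sum>i\<le>k. prod_dist d (p i) (q i)) < min (\<delta> / 2) (1 / 2)"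
      by (rule quot_dist_less_chain[OF close[unfolded tens_dist_def] ends])
    have "near m x0 (\<Sum>i\<le>k. prod_dist d (p i) (q i)) (q k)"
      using near_chain[OF \<open>x0 \<in> X\<close> chain(1,2,4)] short by simp
    moreover have "univ F Q = F (q k)"
      using tens_carrier_member[OF corners_in Q, of "fst (q k)" "snd (q k)"] chain(3)
        univ_tens_el[OF corners_in F] by simp
    ultimately show ?thesis
      using near_imp_dist_less[OF F \<delta>] short by simp
  qed
  moreover have "min (\<delta> / 2) (1 / 2) > 0"
    using \<open>\<delta> > 0\<close> by simp
  ultimately show ?thesis
    by blast
qed

end

section \<open>Finality\<close>

locale met3_coalgebra =
  fixes X :: "'a set" and d :: "'a \<Rightarrow> 'a \<Rightarrow> real" and T L R :: 'a
    and e :: "'a \<Rightarrow> (mlab \<times> 'a) set"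
  assumes coalg: "coalg X d T L R e"
begin

sublocale tripointed_space X d T L R
  using coalg by unfold_locales (simp add: coalg_def)

lemma e_continuous: "metric_cont X d (tens_carrier X T L R) (tens_dist X d T L R) e"
  and e_corners: "e T = tens_el X T L R Ma T" "e L = tens_el X T L R Mb L" "e R = tens_el X T L R Mc R"
  using coalg by (simp_all add: coalg_def met3_mor_def)

lemma e_in_carrier: "x \<in> X \<Longrightarrow> e x \<in> tens_carrier X T L R"
  using e_continuous by (auto simp: metric_cont_def)

lemma e_representative:
  assumes "x \<in> X"
  obtains m y where "y \<in> X" "(m, y) \<in> e x" "e x = tens_el X T L R m y"
proof -
  obtain m y where "y \<in> X" "e x = tens_el X T L R m y"
    using e_in_carrier[OF assms] by (rule tens_carrierE)
  then show thesis
    using that tens_el_self by metis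
qed

definition preserves_corners :: "('a \<Rightarrow> real \<times> real) \<Rightarrow> bool" where
  "preserves_corners g \<longleftrightarrow> g T = gT \<and> g L = gL \<and> g R = gR"

text \<open>step g = gtau \<circ> (M \<otimes> g) \<circ> e, evaluated on a representative of the class e x.\<close>
definition step :: "('a \<Rightarrow> real \<times> real) \<Rightarrow> 'a \<Rightarrow> real \<times> real" where
  "step g x = univ (\<lambda>(m, y). sig m (g y)) (e x)"

lemma sig_comp_respects: "preserves_corners g \<Longrightarrow> (\<lambda>(m, y). sig m (g y)) respects glue_rel X T L R"
  by (simp add: preserves_corners_def respects_glue_rel_iff sig_glue)

lemma step_eq:
  assumes "preserves_corners g" "x \<in> X" "(m, y) \<in> e x"
  shows "step g x = sig m (g y)"
  using tens_carrier_member[OF corners_in e_in_carrier[OF assms(2)] assms(3)]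
    univ_tens_el[OF corners_in sig_comp_respects[OF assms(1)]] by (simp add: step_def)

lemma step_preserves_corners: "preserves_corners g \<Longrightarrow> preserves_corners (step g)"
  using step_eq[of g T Ma T] step_eq[of g L Mb L] step_eq[of g R Mc R]
  by (simp add: preserves_corners_def e_corners tens_el_self corners_in sig_fixes_corners)

lemma dist_step_le:
  assumes "preserves_corners g" "preserves_corners g'" "\<And>y. y \<in> X \<Longrightarrow> dist (g y) (g' y) \<le> c" "x \<in> X"
  shows "dist (step g x) (step g' x) \<le> c / 2"
proof -
  obtain m y where "y \<in> X" "(m, y) \<in> e x"
    using assms(4) by (rule e_representative)
  then show ?thesis
    using step_eq[OF assms(1,4)] step_eq[OF assms(2,4)] assms(3) by (simp add: dist_sig_sig)
qed

lemma step_in_stage: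
  assumes "preserves_corners g" "\<And>y. y \<in> X \<Longrightarrow> g y \<in> stage n" "x \<in> X"
  shows "step g x \<in> stage (Suc n)"
proof -
  obtain m y where "y \<in> X" "(m, y) \<in> e x"
    using assms(3) by (rule e_representative)
  then have "step g x \<in> sig m ` stage n"
    using step_eq[OF assms(1,3)] assms(2) by simp
  then show ?thesis
    by auto
qed

lemma step_continuous:
  assumes "preserves_corners g" "metric_cont X d UNIV dist g"
  shows "metric_cont X d UNIV dist (step g)"
  unfolding metric_cont_def
proof (intro conjI ballI allI impI)
  fix x and \<epsilon> :: real assume "x \<in> X" "\<epsilon> > 0"
  obtain m x0 where "x0 \<in> X" "(m, x0) \<in> e x" "e x = tens_el X T L R m x0"
    using \<open>x \<in> X\<close> by (rule e_representative)
  let ?F = "\<lambda>(m, y). sig m (g y)"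
  have "metric_cont X d UNIV dist (\<lambda>y. ?F (k, y))" for k
    using metric_cont_sig_comp[OF assms(2)] by simp
  then obtain \<delta>' where "\<delta>' > 0" and \<delta>': "\<forall>Q\<in>tens_carrier X T L R.
      tens_dist X d T L R (tens_el X T L R m x0) Q < \<delta>' \<longrightarrow> dist (?F (m, x0)) (univ ?F Q) < \<epsilon>"
    using univ_continuous_at_tens_el[OF sig_comp_respects[OF assms(1)] _ \<open>x0 \<in> X\<close> \<open>\<epsilon> > 0\<close>] by blast
  obtain \<delta> where "\<delta> > 0" and \<delta>: "\<forall>y\<in>X. d x y < \<delta> \<longrightarrow> tens_dist X d T L R (e x) (e y) < \<delta>'"
    using e_continuous \<open>x \<in> X\<close> \<open>\<delta>' > 0\<close> unfolding metric_cont_def by blast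
  have "dist (step g x) (step g y) < \<epsilon>" if "y \<in> X" "d x y < \<delta>" for y
    using \<delta>' \<delta> that e_in_carrier step_eq[OF assms(1) \<open>x \<in> X\<close> \<open>(m, x0) \<in> e x\<close>] \<open>e x = _\<close>
    by (simp add: step_def)
  then show "\<exists>\<delta>>0. \<forall>y\<in>X. d x y < \<delta> \<longrightarrow> dist (step g x) (step g y) < \<epsilon>"
    using \<open>\<delta> > 0\<close> by blast
qed simp

lemma coalg_mor_iff_step_fixed:
  assumes h: "met3_mor X d T L R gasket dist gT gL gR h"
  shows "coalg_mor X d T L R e gasket dist gT gL gR gsigma h \<longleftrightarrow> (\<forall>x\<in>X. step h x = h x)"
proof -
  have img: "h ` X \<subseteq> gasket" and pres: "preserves_corners h"
    using h by (auto simp: met3_mor_def metric_cont_def preserves_corners_def)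
  have "gsigma (h x) = tens_map gasket gT gL gR h (e x) \<longleftrightarrow> step h x = h x" if "x \<in> X" for x
  proof -
    obtain m y where y: "y \<in> X" "(m, y) \<in> e x" "e x = tens_el X T L R m y"
      using \<open>x \<in> X\<close> by (rule e_representative)
    have "tens_map gasket gT gL gR h (e x) = gasket_el m (h y)"
      unfolding y(3) using img pres corners_in corners_in_gasket y(1)
      by (intro tens_map_tens_el) (auto simp: preserves_corners_def)
    moreover have "step h x = sig m (h y)"
      by (rule step_eq[OF pres \<open>x \<in> X\<close> y(2)])
    moreover have "gsigma (h x) = gasket_el m (h y) \<longleftrightarrow> h x = sig m (h y)"
      using img \<open>x \<in> X\<close> y(1) by (intro gsigma_eq_gasket_el_iff) auto
    ultimately show ?thesis
      by (simp only:) auto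
  qed
  then show ?thesis
    using h by (auto simp: coalg_mor_def)
qed

definition edge_param :: "'a \<Rightarrow> real" where
  "edge_param x = 1 + d x T - d x R"

text \<open>The iteration of step starts from the polygonal path from gT via gL to gR, at parameter
  edge_param x \<in> [0, 2], which is 0, 1, 2 at T, L, R.\<close>
definition edge_path :: "'a \<Rightarrow> real \<times> real" where
  "edge_path x = gT + min (edge_param x) 1 *\<^sub>R (gL - gT) + max (edge_param x - 1) 0 *\<^sub>R (gR - gL)"

lemma edge_path_preserves_corners: "preserves_corners edge_path"
  using dist_corners corners_in commute[of L T] commute[of R T]
  by (simp add: preserves_corners_def edge_path_def edge_param_def)

lemma edge_path_in_hull:
  assumes "x \<in> X"
  shows "edge_path x \<in> gasket_hull"
proof -
  define t where "t = edge_param x"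
  have "0 \<le> d x T" "0 \<le> d x R"
    by simp_all
  then have "0 \<le> t" "t \<le> 2"
    using dist_le_1[OF assms corners_in(1)] dist_le_1[OF assms corners_in(3)]
    unfolding t_def edge_param_def by linarith+
  show ?thesis
  proof (cases "t \<le> 1")
    case True
    then have "edge_path x = (1 - t) *\<^sub>R gT + t *\<^sub>R gL"
      by (simp add: edge_path_def t_def algebra_simps)
    then show ?thesis
      using convexD[OF convex_gasket_hull corners_in_gasket_hull(1,2)] True \<open>0 \<le> t\<close> by simp
  next
    case False
    then have "edge_path x = (2 - t) *\<^sub>R gL + (t - 1) *\<^sub>R gR"
      by (simp add: edge_path_def t_def algebra_simps scaleR_2)
    then show ?thesis
      using convexD[OF convex_gasket_hull corners_in_gasket_hull(2,3)] False \<open>t \<le> 2\<close> by simp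
  qed
qed

lemma dist_edge_path_le:
  assumes "x \<in> X" "y \<in> X"
  shows "dist (edge_path x) (edge_path y) \<le> 4 * d x y"
proof -
  let ?t = edge_param
  have "\<bar>d x w - d y w\<bar> \<le> d x y" if "w \<in> X" for w
    using triangle[OF assms that] triangle[OF assms(2,1) that] commute[of y x] by linarith
  then have "\<bar>d x T - d y T\<bar> \<le> d x y" "\<bar>d x R - d y R\<bar> \<le> d x y"
    using corners_in by blast+
  then have t: "\<bar>?t x - ?t y\<bar> \<le> 2 * d x y"
    unfolding edge_param_def by linarith
  have "edge_path x - edge_path y
      = (min (?t x) 1 - min (?t y) 1) *\<^sub>R (gL - gT) + (max (?t x - 1) 0 - max (?t y - 1) 0) *\<^sub>R (gR - gL)"
    by (simp add: edge_path_def algebra_simps)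
  moreover have "norm (gL - gT) = 1" "norm (gR - gL) = 1"
    using dist_gasket_corners(1,3) by (simp_all add: dist_norm norm_minus_commute)
  ultimately have "dist (edge_path x) (edge_path y)
      \<le> \<bar>min (?t x) 1 - min (?t y) 1\<bar> + \<bar>max (?t x - 1) 0 - max (?t y - 1) 0\<bar>"
    by (metis dist_norm norm_scaleR norm_triangle_ineq mult.right_neutral real_norm_def)
  also have "\<dots> \<le> 4 * d x y"
    using t by (auto simp: min_def max_def abs_if)
  finally show ?thesis .
qed

lemma edge_path_continuous: "metric_cont X d UNIV dist edge_path"
  unfolding metric_cont_def
proof (intro conjI ballI allI impI)
  fix x and \<epsilon> :: real assume "x \<in> X" "\<epsilon> > 0"
  then have "\<forall>y\<in>X. d x y < \<epsilon> / 4 \<longrightarrow> dist (edge_path x) (edge_path y) < \<epsilon>"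
    using dist_edge_path_le by fastforce
  then show "\<exists>\<delta>>0. \<forall>y\<in>X. d x y < \<delta> \<longrightarrow> dist (edge_path x) (edge_path y) < \<epsilon>"
    using \<open>\<epsilon> > 0\<close> by (intro exI[of _ "\<epsilon> / 4"]) simp
qed simp

definition approx :: "nat \<Rightarrow> 'a \<Rightarrow> real \<times> real" where
  "approx n = (step ^^ n) edge_path"

lemma approx_Suc: "approx (Suc n) = step (approx n)"
  by (simp add: approx_def)

lemma approx_preserves_corners: "preserves_corners (approx n)"
  by (induction n) (simp_all add: approx_def edge_path_preserves_corners step_preserves_corners)

lemma approx_continuous: "metric_cont X d UNIV dist (approx n)"
  by (induction n) (simp_all add: approx_Suc edge_path_continuous step_continuous approx_preserves_corners,
      simp add: approx_def edge_path_continuous)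

lemma approx_in_stage: "x \<in> X \<Longrightarrow> approx n x \<in> stage n"
proof (induction n arbitrary: x)
  case 0
  then show ?case
    by (simp add: approx_def edge_path_in_hull)
next
  case (Suc n)
  have "step (approx n) x \<in> stage (Suc n)"
    by (rule step_in_stage[OF approx_preserves_corners Suc.IH Suc.prems])
  then show ?case
    by (simp only: approx_Suc)
qed

lemma dist_step_iterate_le:
  assumes "preserves_corners g" "preserves_corners g'" "\<And>y. y \<in> X \<Longrightarrow> dist (g y) (g' y) \<le> c"
  shows "x \<in> X \<Longrightarrow> dist ((step ^^ n) g x) ((step ^^ n) g' x) \<le> c / 2 ^ n"
proof (induction n arbitrary: x)
  case 0
  then show ?case
    using assms(3) by simp
next
  case (Suc n)
  have "preserves_corners ((step ^^ n) g)" "preserves_corners ((step ^^ n) g')"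
    using assms(1,2) by (induction n) (simp_all add: step_preserves_corners)
  from dist_step_le[OF this Suc.IH Suc.prems] show ?case
    by simp
qed

lemma dist_approx_le: "x \<in> X \<Longrightarrow> dist (approx (n + k) x) (approx n x) \<le> (1/2) ^ n"
proof -
  assume "x \<in> X"
  have "approx (n + k) = (step ^^ n) (approx k)"
    by (simp add: approx_def funpow_add)
  moreover have "dist (approx k y) (edge_path y) \<le> 1" if "y \<in> X" for y
    using gasket_hull_diameter stage_subset_hull approx_in_stage edge_path_in_hull that by blast
  ultimately show ?thesis
    using dist_step_iterate_le[OF approx_preserves_corners edge_path_preserves_corners _ \<open>x \<in> X\<close>, of k 1 n]
    by (simp add: approx_def power_one_over)
qed

definition gasket_map :: "'a \<Rightarrow> real \<times> real" where
  "gasket_map x = lim (\<lambda>n. approx n x)"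

lemma approx_tendsto: "x \<in> X \<Longrightarrow> (\<lambda>n. approx n x) \<longlonglongrightarrow> gasket_map x"
  and dist_gasket_map_approx: "x \<in> X \<Longrightarrow> dist (gasket_map x) (approx n x) \<le> (1/2) ^ n"
  using half_pow_Cauchy_lim[of "\<lambda>n. approx n x"] dist_approx_le by (simp_all add: gasket_map_def)

lemma gasket_map_preserves_corners: "preserves_corners gasket_map"
proof -
  have "gasket_map z = v" if "z \<in> X" "\<And>n. approx n z = v" for z v
    using approx_tendsto[OF that(1)] that(2) by (simp add: LIMSEQ_const_iff)
  then show ?thesis
    using approx_preserves_corners corners_in by (simp add: preserves_corners_def)
qed

lemma gasket_map_in_gasket: "x \<in> X \<Longrightarrow> gasket_map x \<in> gasket"
proof -
  assume "x \<in> X"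
  have "gasket_map x \<in> stage k" for k
  proof (rule Lim_in_closed_set[OF compact_imp_closed[OF compact_stage]])
    show "\<forall>\<^sub>F n in sequentially. approx n x \<in> stage k"
    proof (rule eventually_sequentiallyI)
      fix n assume "k \<le> n"
      then show "approx n x \<in> stage k"
        using approx_in_stage[OF \<open>x \<in> X\<close>] stage_antimono by blast
    qed
  qed (use approx_tendsto[OF \<open>x \<in> X\<close>] in auto)
  then show ?thesis
    by (simp add: gasket_eq_Inter_stages)
qed

lemma gasket_map_continuous: "metric_cont X d UNIV dist gasket_map"
  by (rule metric_cont_uniform_limit[OF approx_continuous dist_gasket_map_approx])

lemma step_gasket_map: "x \<in> X \<Longrightarrow> step gasket_map x = gasket_map x"
proof -
  assume "x \<in> X"
  have "dist (step gasket_map x) (gasket_map x) \<le> (1/2) ^ n" for n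
  proof -
    have "dist (step gasket_map x) (approx (Suc n) x) \<le> (1/2) ^ n / 2"
      using dist_step_le[OF gasket_map_preserves_corners approx_preserves_corners[of n]
          dist_gasket_map_approx \<open>x \<in> X\<close>]
      by (simp add: approx_Suc)
    moreover have "dist (approx (Suc n) x) (gasket_map x) \<le> (1/2) ^ Suc n"
      using dist_gasket_map_approx[OF \<open>x \<in> X\<close>, of "Suc n"] by (simp add: dist_commute)
    ultimately show ?thesis
      using dist_triangle[of "step gasket_map x" "gasket_map x" "approx (Suc n) x"] by simp
  qed
  then show ?thesis
    using nonpos_if_le_half_pow[of "dist (step gasket_map x) (gasket_map x)"] by simp
qed

lemma gasket_map_met3_mor: "met3_mor X d T L R gasket dist gT gL gR gasket_map"
  using gasket_map_continuous gasket_map_in_gasket gasket_map_preserves_corners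
  by (auto simp: met3_mor_def metric_cont_def preserves_corners_def)

lemma gasket_map_coalg_mor: "coalg_mor X d T L R e gasket dist gT gL gR gsigma gasket_map"
  using coalg_mor_iff_step_fixed[OF gasket_map_met3_mor] step_gasket_map by simp

lemma coalg_mor_unique:
  assumes h: "coalg_mor X d T L R e gasket dist gT gL gR gsigma h" and "x \<in> X"
  shows "h x = gasket_map x"
proof -
  have mor: "met3_mor X d T L R gasket dist gT gL gR h"
    using h by (simp add: coalg_mor_def)
  then have img: "h ` X \<subseteq> gasket" and pres: "preserves_corners h"
    by (auto simp: met3_mor_def metric_cont_def preserves_corners_def)
  have fixed: "step h y = h y" if "y \<in> X" for y
    using coalg_mor_iff_step_fixed[OF mor] h that by simp
  have "dist (h y) (gasket_map y) \<le> (1/2) ^ n" if "y \<in> X" for y n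
    using that
  proof (induction n arbitrary: y)
    case 0
    then have "h y \<in> gasket"
      using img by blast
    then show ?case
      using gasket_diameter gasket_map_in_gasket[OF 0] by simp
  next
    case (Suc n)
    then show ?case
      using dist_step_le[OF pres gasket_map_preserves_corners Suc.IH Suc.prems]
        fixed[OF Suc.prems] step_gasket_map[OF Suc.prems] by simp
  qed
  then show ?thesis
    using nonpos_if_le_half_pow[of "dist (h x) (gasket_map x)"] \<open>x \<in> X\<close> by simp
qed

end

theorem mainTheorem10:
  fixes X :: "'a set" and d :: "'a \<Rightarrow> 'a \<Rightarrow> real" and T L R :: 'a
    and e :: "'a \<Rightarrow> (mlab \<times> 'a) set"
  shows "coalg gasket dist gT gL gR gsigma \<and>
    (coalg X d T L R e \<longrightarrow>
      (\<exists>h. coalg_mor X d T L R e gasket dist gT gL gR gsigma h \<and>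
        (\<forall>h'. coalg_mor X d T L R e gasket dist gT gL gR gsigma h' \<longrightarrow> (\<forall>x\<in>X. h' x = h x))))"
proof (intro conjI impI)
  show "coalg gasket dist gT gL gR gsigma"
    by (rule coalg_gasket)
next
  assume "coalg X d T L R e"
  then interpret met3_coalgebra X d T L R e
    by unfold_locales
  show "\<exists>h. coalg_mor X d T L R e gasket dist gT gL gR gsigma h \<and>
      (\<forall>h'. coalg_mor X d T L R e gasket dist gT gL gR gsigma h' \<longrightarrow> (\<forall>x\<in>X. h' x = h x))"
    using gasket_map_coalg_mor coalg_mor_unique by blast
qed

end
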